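(* For any $F\in[0,1)$, any $\alpha\in(0,1]$, any $L_0>0$, and any target transport distance $W>0$, there exist a metric space $(\mathcal{X},d)$, a scoring function $s$ that is $(\alpha,L_0)$-Hölder continuous on $(\mathcal{X},d)$ (i.e. $|s(x)-s(y)|\le L_0 d(x,y)^\alpha$), a base distribution $\mathbb{P}_0$ and a skill-augmented distribution $\mathbb{P}_\pi$ on $\mathcal{X}$ such that: (i) the metric freedom of $s$ under $\mathbb{P}_0$ equals $F$; (ii) $\tilde{\mathcal{W}}_1(\mathbb{P}_\pi,\mathbb{P}_0)=W$; (iii) $\mathrm{Lift}(\pi)\ge\tfrac12 L_0(1-F)\,W$.
   Context: The metric freedom of $s$ under $\mathbb{P}_0$ is $1-r$, where $r$ is the Spearman rank correlation between $U=\tilde d(X,X')$ and $V=|s(X)-s(X')|$ for $X,X'$ i.i.d. $\sim\mathbb{P}_0$, with $\tilde d(x,y)=d(x,y)^\alpha$. $\tilde{\mathcal{W}}_1$ is the Wasserstein-1 distance with respect to $\tilde d$. $\mathrm{Lift}(\pi)=\mathbb{E}_{\mathbb{P}_\pi}[s]-\mathbb{E}_{\mathbb{P}_0}[s]$. *)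

theory Defs
  imports "HOL-Probability.Probability"
begin

definition metric_on :: "'a set \<Rightarrow> ('a \<Rightarrow> 'a \<Rightarrow> real) \<Rightarrow> bool" where
  "metric_on S d \<longleftrightarrow>
     (\<forall>x\<in>S. \<forall>y\<in>S. 0 \<le> d x y \<and> (d x y = 0 \<longleftrightarrow> x = y) \<and> d x y = d y x) \<and>
     (\<forall>x\<in>S. \<forall>y\<in>S. \<forall>z\<in>S. d x z \<le> d x y + d y z)"

definition holder_on :: "'a set \<Rightarrow> ('a \<Rightarrow> 'a \<Rightarrow> real) \<Rightarrow> real \<Rightarrow> real \<Rightarrow> ('a \<Rightarrow> real) \<Rightarrow> bool" where
  "holder_on S d \<alpha> L s \<longleftrightarrow> (\<forall>x\<in>S. \<forall>y\<in>S. \<bar>s x - s y\<bar> \<le> L * d x y powr \<alpha>)"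

text \<open>Mid-rank (population rank) transform of a real random variable U on N:
  P(U < u) + P(U = u)/2; equals the distribution function when U has no atoms.\<close>
definition midrank :: "'b measure \<Rightarrow> ('b \<Rightarrow> real) \<Rightarrow> real \<Rightarrow> real" where
  "midrank N U u = measure N {\<omega>\<in>space N. U \<omega> < u} + measure N {\<omega>\<in>space N. U \<omega> = u} / 2"

definition pearson :: "'b measure \<Rightarrow> ('b \<Rightarrow> real) \<Rightarrow> ('b \<Rightarrow> real) \<Rightarrow> real" where
  "pearson N A B =
     (let EA = integral\<^sup>L N A; EB = integral\<^sup>L N B;
          cov = integral\<^sup>L N (\<lambda>\<omega>. (A \<omega> - EA) * (B \<omega> - EB));
          vA = integral\<^sup>L N (\<lambda>\<omega>. (A \<omega> - EA)\<^sup>2);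
          vB = integral\<^sup>L N (\<lambda>\<omega>. (B \<omega> - EB)\<^sup>2)
      in cov / sqrt (vA * vB))"

definition spearman :: "'b measure \<Rightarrow> ('b \<Rightarrow> real) \<Rightarrow> ('b \<Rightarrow> real) \<Rightarrow> real" where
  "spearman N U V = pearson N (\<lambda>\<omega>. midrank N U (U \<omega>)) (\<lambda>\<omega>. midrank N V (V \<omega>))"

definition metric_freedom :: "'a measure \<Rightarrow> ('a \<Rightarrow> 'a \<Rightarrow> real) \<Rightarrow> real \<Rightarrow> ('a \<Rightarrow> real) \<Rightarrow> real" where
  "metric_freedom P0 d \<alpha> s =
     1 - spearman (P0 \<Otimes>\<^sub>M P0) (\<lambda>(x, y). d x y powr \<alpha>) (\<lambda>(x, y). \<bar>s x - s y\<bar>)"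

definition couplings :: "'a measure \<Rightarrow> 'a measure \<Rightarrow> ('a \<times> 'a) measure set" where
  "couplings P Q = {C. sets C = sets (P \<Otimes>\<^sub>M Q) \<and> prob_space C \<and>
                      distr C P fst = P \<and> distr C Q snd = Q}"

definition wasserstein1 :: "('a \<Rightarrow> 'a \<Rightarrow> real) \<Rightarrow> real \<Rightarrow> 'a measure \<Rightarrow> 'a measure \<Rightarrow> ennreal" where
  "wasserstein1 d \<alpha> P Q =
     (INF C\<in>couplings P Q. \<integral>\<^sup>+ z. ennreal (d (fst z) (snd z) powr \<alpha>) \<partial>C)"

definition lift :: "'a measure \<Rightarrow> 'a measure \<Rightarrow> ('a \<Rightarrow> real) \<Rightarrow> real" where
  "lift Ppi P0 s = integral\<^sup>L Ppi s - integral\<^sup>L P0 s"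

end

(*
  Take the three points 0, 1, 2 with the discrete metric of height D, where D powr alpha = h,
  the score s = L0 * h * [x = 2], a base distribution P0 with masses u, v, t, and the Dirac
  mass at 2 as the skill-augmented distribution. Every coupling of a Dirac mass with P0 is the
  product coupling, so the transport cost is h * (1 - t); the lift is L0 * h * (1 - t) = L0 * W
  for h = W / (1 - t), which exceeds the required bound.

  Both d(X, X') powr alpha and |s X - s X'| are two-valued, so their Spearman correlation is
  the phi coefficient of the nested events {X ~= X'} and {exactly one of X, X' equals 2}.
  With probabilities P = 1 - (u^2 + v^2 + t^2) and Q = 2 t (1 - t) it equals
  sqrt (Q (1 - P) / (P (1 - Q))). Taking t = rho^2 / 16 for rho = 1 - F and splitting 1 - t
  into u + v so that P = Q / (Q + rho^2 (1 - Q)) makes it rho, i.e. the metric freedom is F.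
*)
theory Submission
  imports Defs
begin

section \<open>Spearman correlation of two-valued variables\<close>

definition phi_coefficient :: "real \<Rightarrow> real \<Rightarrow> real \<Rightarrow> real" where
  "phi_coefficient pAB pA pB = (pAB - pA * pB) / sqrt (pA * (1 - pA) * pB * (1 - pB))"

context prob_space
begin

lemma integrable_indicator_event [simp]: "A \<in> events \<Longrightarrow> integrable M (indicator A :: 'a \<Rightarrow> real)"
  by (simp add: emeasure_eq_measure)

lemma expectation_affine_indicator:
  assumes "A \<in> events"
  shows "expectation (\<lambda>\<omega>. a + b * indicator A \<omega>) = a + b * prob A"
  using assms by (simp add: prob_space)

lemma expectation_centered_indicators:
  assumes "A \<in> events" "B \<in> events"
  shows "expectation (\<lambda>\<omega>. (indicator A \<omega> - prob A) * (indicator B \<omega> - prob B))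
       = prob (A \<inter> B) - prob A * prob B"
proof -
  have "(\<lambda>\<omega>. (indicator A \<omega> - prob A) * (indicator B \<omega> - prob B)) =
      (\<lambda>\<omega>. indicator (A \<inter> B) \<omega> - prob B * indicator A \<omega> - prob A * indicator B \<omega>
            + prob A * prob B :: real)"
    by (auto simp: fun_eq_iff algebra_simps split: split_indicator)
  then show ?thesis using assms by (simp add: prob_space)
qed

lemma pearson_affine_indicators:
  assumes A: "A \<in> events" and B: "B \<in> events" and "0 < b" "0 < e"
  shows "pearson M (\<lambda>\<omega>. a + b * indicator A \<omega>) (\<lambda>\<omega>. c + e * indicator B \<omega>)
       = phi_coefficient (prob (A \<inter> B)) (prob A) (prob B)"
proof -
  have centered: "a + b * indicator A \<omega> - (a + b * prob A) = b * (indicator A \<omega> - prob A)"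
    for a b :: real and A \<omega> by algebra
  have var: "expectation (\<lambda>\<omega>. (b * (indicator A \<omega> - prob A))\<^sup>2) = b\<^sup>2 * (prob A * (1 - prob A))"
    if "A \<in> events" for b A
  proof -
    have "(\<lambda>\<omega>. (b * (indicator A \<omega> - prob A))\<^sup>2)
        = (\<lambda>\<omega>. b\<^sup>2 * ((indicator A \<omega> - prob A) * (indicator A \<omega> - prob A)))"
      by (simp add: fun_eq_iff power2_eq_square)
    then have "expectation (\<lambda>\<omega>. (b * (indicator A \<omega> - prob A))\<^sup>2)
        = b\<^sup>2 * expectation (\<lambda>\<omega>. (indicator A \<omega> - prob A) * (indicator A \<omega> - prob A))"
      by (simp only: integral_mult_right_zero)
    then show ?thesis
      using expectation_centered_indicators[OF that that] by (simp add: right_diff_distrib)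
  qed
  have "(\<lambda>\<omega>. b * (indicator A \<omega> - prob A) * (e * (indicator B \<omega> - prob B)))
      = (\<lambda>\<omega>. (b * e) * ((indicator A \<omega> - prob A) * (indicator B \<omega> - prob B)))"
    by (simp add: fun_eq_iff mult_ac)
  then have cov: "expectation (\<lambda>\<omega>. b * (indicator A \<omega> - prob A) * (e * (indicator B \<omega> - prob B)))
      = b * e * (prob (A \<inter> B) - prob A * prob B)"
    by (simp only: integral_mult_right_zero expectation_centered_indicators[OF A B])
  have "sqrt (b\<^sup>2 * (prob A * (1 - prob A)) * (e\<^sup>2 * (prob B * (1 - prob B))))
      = b * e * sqrt (prob A * (1 - prob A) * prob B * (1 - prob B))"
    using \<open>0 < b\<close> \<open>0 < e\<close> by (simp add: real_sqrt_mult mult_ac)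
  then show ?thesis
    using assms
    unfolding pearson_def Let_def expectation_affine_indicator[OF A] expectation_affine_indicator[OF B]
      centered var[OF A] var[OF B] cov
    by (simp add: phi_coefficient_def)
qed

lemma midrank_two_valued:
  assumes "A \<in> events" "0 < h"
  shows "midrank M (\<lambda>\<omega>. if \<omega> \<in> A then h else 0) (if \<omega> \<in> A then h else 0)
       = (1 - prob A) / 2 + 1/2 * indicator A \<omega>"
proof (cases "\<omega> \<in> A")
  case True
  have "{x \<in> space M. (if x \<in> A then h else 0) < h} = space M - A"
       "{x \<in> space M. (if x \<in> A then h else 0) = h} = A"
    using assms sets.sets_into_space by auto
  with True assms show ?thesis by (simp add: midrank_def prob_compl field_simps)
next
  case False
  have "{x \<in> space M. (if x \<in> A then h else 0) < 0} = {}"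
       "{x \<in> space M. (if x \<in> A then h else 0) = 0} = space M - A"
    using assms by auto
  with False assms show ?thesis by (simp add: midrank_def prob_compl field_simps)
qed

lemma spearman_indicators:
  assumes "A \<in> events" "B \<in> events" "0 < h" "0 < c"
  shows "spearman M (\<lambda>\<omega>. if \<omega> \<in> A then h else 0) (\<lambda>\<omega>. if \<omega> \<in> B then c else 0)
       = phi_coefficient (prob (A \<inter> B)) (prob A) (prob B)"
  using assms
  unfolding spearman_def midrank_two_valued[OF assms(1,3)] midrank_two_valued[OF assms(2,4)]
  by (intro pearson_affine_indicators) auto

end

lemma spearman_cong:
  assumes "\<And>\<omega>. \<omega> \<in> space N \<Longrightarrow> U \<omega> = U' \<omega>" "\<And>\<omega>. \<omega> \<in> space N \<Longrightarrow> V \<omega> = V' \<omega>"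
  shows "spearman N U V = spearman N U' V'"
proof -
  have "{\<omega> \<in> space N. U \<omega> < u} = {\<omega> \<in> space N. U' \<omega> < u}"
       "{\<omega> \<in> space N. U \<omega> = u} = {\<omega> \<in> space N. U' \<omega> = u}"
       "{\<omega> \<in> space N. V \<omega> < u} = {\<omega> \<in> space N. V' \<omega> < u}"
       "{\<omega> \<in> space N. V \<omega> = u} = {\<omega> \<in> space N. V' \<omega> = u}" for u
    using assms by auto
  then have "midrank N U = midrank N U'" "midrank N V = midrank N V'"
    by (simp_all add: fun_eq_iff midrank_def)
  then show ?thesis
    unfolding spearman_def pearson_def using assms by (simp cong: Bochner_Integration.integral_cong)
qed

section \<open>Discrete metrics and transport from a Dirac mass\<close>

definition discrete_dist :: "real \<Rightarrow> 'a \<Rightarrow> 'a \<Rightarrow> real" where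
  "discrete_dist D x y = (if x = y then 0 else D)"

lemma metric_on_discrete_dist: "0 < D \<Longrightarrow> metric_on S (discrete_dist D)"
  by (auto simp: metric_on_def discrete_dist_def)

lemma holder_on_discrete_dist:
  assumes "\<And>x y. x \<in> S \<Longrightarrow> y \<in> S \<Longrightarrow> \<bar>s x - s y\<bar> \<le> L * D powr \<alpha>"
  shows "holder_on S (discrete_dist D) \<alpha> L s"
  using assms by (auto simp: holder_on_def discrete_dist_def)

text \<open>The equation also holds at \<open>y = a\<close> because \<open>0 powr \<alpha> = 0\<close>.\<close>

lemma discrete_dist_powr_eq: "discrete_dist D a y powr \<alpha> = D powr \<alpha> - D powr \<alpha> * indicator {a} y"
  by (simp add: discrete_dist_def indicator_def)

lemma coupling_return_left:
  assumes "prob_space P" "a \<in> space P"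
  shows "distr P (return P a \<Otimes>\<^sub>M P) (\<lambda>y. (a, y)) \<in> couplings (return P a) P"
proof -
  have m: "(\<lambda>y. (a, y)) \<in> measurable P (return P a \<Otimes>\<^sub>M P)"
    using assms(2) by (intro measurable_Pair measurable_const measurable_ident_sets) simp_all
  have "distr P (return P a) (\<lambda>y. a) = return P a"
    using prob_space.distr_const[OF assms(1), of a "return P a"] assms(2)
      return_cong[of "return P a" P a]
    by simp
  with assms m show ?thesis
    by (simp add: couplings_def distr_distr[OF measurable_fst m] distr_distr[OF measurable_snd m]
        comp_def prob_space.prob_space_distr)
qed

lemma wasserstein1_return_left:
  assumes P: "prob_space P" and a: "a \<in> space P" "{a} \<in> sets P"
    and cost: "(\<lambda>y. d a y powr \<alpha>) \<in> borel_measurable P"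
  shows "wasserstein1 d \<alpha> (return P a) P = (\<integral>\<^sup>+ y. ennreal (d a y powr \<alpha>) \<partial>P)"
proof -
  have "(\<integral>\<^sup>+ z. ennreal (d (fst z) (snd z) powr \<alpha>) \<partial>C) = (\<integral>\<^sup>+ y. ennreal (d a y powr \<alpha>) \<partial>P)"
    if "C \<in> couplings (return P a) P" for C
  proof -
    from that have sets_C: "sets C = sets (return P a \<Otimes>\<^sub>M P)"
      and fst_marginal: "distr C (return P a) fst = return P a"
      and snd_marginal: "distr C P snd = P"
      by (auto simp: couplings_def)
    have fst: "fst \<in> measurable C (return P a)" and snd: "snd \<in> measurable C P"
      unfolding measurable_cong_sets[OF sets_C refl] by (rule measurable_fst, rule measurable_snd)
    have "AE x in return P a. x = a"
      using a by (intro AE_I'[of "space P - {a}"]) (auto simp: null_sets_def emeasure_return)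
    moreover have "{x. x = a \<and> x \<in> space P} = {a}"
      using a by auto
    \<comment> \<open>the first marginal is the Dirac mass, so the cost only depends on the second coordinate\<close>
    ultimately have "AE z in C. fst z = a"
      using a by (subst (asm) fst_marginal[symmetric], subst (asm) AE_distr_iff[OF fst]) auto
    then have "(\<integral>\<^sup>+ z. ennreal (d (fst z) (snd z) powr \<alpha>) \<partial>C)
        = (\<integral>\<^sup>+ z. ennreal (d a (snd z) powr \<alpha>) \<partial>C)"
      by (intro nn_integral_cong_AE) (auto elim: AE_mp)
    also have "\<dots> = (\<integral>\<^sup>+ y. ennreal (d a y powr \<alpha>) \<partial>distr C P snd)"
      using snd cost by (simp add: nn_integral_distr)
    finally show ?thesis by (simp add: snd_marginal)
  qed
  then have "wasserstein1 d \<alpha> (return P a) P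
      = (INF C\<in>couplings (return P a) P. \<integral>\<^sup>+ y. ennreal (d a y powr \<alpha>) \<partial>P)"
    unfolding wasserstein1_def by (rule INF_cong[OF refl])
  also have "\<dots> = (\<integral>\<^sup>+ y. ennreal (d a y powr \<alpha>) \<partial>P)"
    using coupling_return_left[OF P a(1)] by (intro INF_const) auto
  finally show ?thesis .
qed

lemma wasserstein1_discrete_dist_return:
  assumes P: "prob_space P" and a: "a \<in> space P" "{a} \<in> sets P"
  shows "wasserstein1 (discrete_dist D) \<alpha> (return P a) P = ennreal (D powr \<alpha> * (1 - measure P {a}))"
proof -
  interpret prob_space P by fact
  have "wasserstein1 (discrete_dist D) \<alpha> (return P a) P
      = (\<integral>\<^sup>+ y. ennreal (D powr \<alpha> - D powr \<alpha> * indicator {a} y) \<partial>P)"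
    using a by (subst wasserstein1_return_left) (simp_all add: P discrete_dist_powr_eq)
  also have "\<dots> = ennreal (expectation (\<lambda>y. D powr \<alpha> - D powr \<alpha> * indicator {a} y))"
  proof (rule nn_integral_eq_integral)
    show "integrable P (\<lambda>y. D powr \<alpha> - D powr \<alpha> * indicator {a} y)"
      using a by (intro Bochner_Integration.integrable_diff integrable_mult_right) auto
  qed (auto split: split_indicator)
  also have "\<dots> = ennreal (D powr \<alpha> * (1 - prob {a}))"
    using a by (simp add: prob_space right_diff_distrib)
  finally show ?thesis .
qed

lemma integrable_return:
  fixes f :: "'a \<Rightarrow> 'b::{banach, second_countable_topology}"
  assumes "x \<in> space M" "f \<in> borel_measurable M"
  shows "integrable (return M x) f"
proof (rule integrableI_bounded)
  show "f \<in> borel_measurable (return M x)"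
    using assms(2) by (simp add: measurable_cong_sets[OF sets_return refl])
  show "(\<integral>\<^sup>+ y. ennreal (norm (f y)) \<partial>return M x) < \<infinity>"
    using assms by (subst nn_integral_return) auto
qed

lemma lift_return_step:
  assumes "prob_space P" "a \<in> space P" "{a} \<in> sets P"
  shows "lift (return P a) P (\<lambda>x. if x = a then c else 0) = c * (1 - measure P {a})"
proof -
  interpret prob_space P by fact
  have step: "(\<lambda>x. if x = a then c else 0) = (\<lambda>x. 0 + c * indicator {a} x)"
    by (auto simp: fun_eq_iff)
  have "integral\<^sup>L (return P a) (\<lambda>x. if x = a then c else 0) = c"
    using assms(2,3) by (subst integral_return) (auto simp: step)
  then show ?thesis
    using assms(3) by (simp add: lift_def step expectation_affine_indicator right_diff_distrib)
qed

section \<open>Products of finite point measures\<close>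

lemma pair_measure_point_measure_finite:
  fixes f :: "'a \<Rightarrow> real" and g :: "'b \<Rightarrow> real"
  assumes S: "finite S" and T: "finite T" and f: "\<And>x. 0 \<le> f x" and g: "\<And>y. 0 \<le> g y"
  shows "point_measure S (\<lambda>x. ennreal (f x)) \<Otimes>\<^sub>M point_measure T (\<lambda>y. ennreal (g y))
       = point_measure (S \<times> T) (\<lambda>z. ennreal (f (fst z) * g (snd z)))"
proof -
  have "finite_measure (density (count_space T) (\<lambda>y. ennreal (g y)))"
    using T by (intro finite_measureI) (simp add: emeasure_density nn_integral_count_space_finite)
  then have "sigma_finite_measure (density (count_space T) (\<lambda>y. ennreal (g y)))"
    by (simp add: finite_measure_def)
  then show ?thesis
    unfolding point_measure_def
    using f g sigma_finite_measure_count_space_finite[OF T]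
    by (simp add: pair_measure_density pair_measure_count_space[OF S T] ennreal_mult split_beta')
qed

lemma measure_pair_point_measure_off_diagonal:
  fixes w :: "'a \<Rightarrow> real"
  assumes S: "finite S" and w: "\<And>x. 0 \<le> w x" "sum w S = 1"
  shows "measure (point_measure (S \<times> S) (\<lambda>z. ennreal (w (fst z) * w (snd z))))
           {z \<in> S \<times> S. fst z \<noteq> snd z} = 1 - (\<Sum>x\<in>S. (w x)\<^sup>2)"
proof -
  define q where "q z = w (fst z) * w (snd z)" for z
  have "{z \<in> S \<times> S. fst z \<noteq> snd z} = S \<times> S - (\<lambda>x. (x, x)) ` S"
    by auto
  moreover have "sum q (S \<times> S) = 1"
    using w by (simp add: q_def sum.cartesian_product' sum_product[symmetric])
  moreover have "sum q ((\<lambda>x. (x, x)) ` S) = (\<Sum>x\<in>S. (w x)\<^sup>2)"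
    by (simp add: sum.reindex inj_on_def q_def power2_eq_square)
  ultimately have "sum q {z \<in> S \<times> S. fst z \<noteq> snd z} = 1 - (\<Sum>x\<in>S. (w x)\<^sup>2)"
    using S by (simp add: sum_diff image_subset_iff)
  then show ?thesis
    using S w by (subst measure_point_measure_finite_if) (auto simp: q_def)
qed

lemma measure_pair_point_measure_separating:
  fixes w :: "'a \<Rightarrow> real"
  assumes S: "finite S" and w: "\<And>x. 0 \<le> w x" "sum w S = 1" and a: "a \<in> S"
  shows "measure (point_measure (S \<times> S) (\<lambda>z. ennreal (w (fst z) * w (snd z))))
           {z \<in> S \<times> S. (fst z = a) \<noteq> (snd z = a)} = 2 * w a * (1 - w a)"
proof -
  define q where "q z = w (fst z) * w (snd z)" for z
  have "{z \<in> S \<times> S. (fst z = a) \<noteq> (snd z = a)} = {a} \<times> (S - {a}) \<union> (S - {a}) \<times> {a}"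
    using a by auto
  then have "sum q {z \<in> S \<times> S. (fst z = a) \<noteq> (snd z = a)}
      = sum q ({a} \<times> (S - {a})) + sum q ((S - {a}) \<times> {a})"
    using S by (simp only:) (rule sum.union_disjoint, auto)
  also have "\<dots> = w a * sum w (S - {a}) + sum w (S - {a}) * w a"
    by (simp add: sum.cartesian_product' q_def sum_distrib_left sum_distrib_right)
  also have "\<dots> = 2 * w a * (1 - w a)"
    using S a w(2) by (simp add: sum_diff1)
  finally show ?thesis
    using S w by (subst measure_point_measure_finite_if) (auto simp: q_def)
qed

lemma metric_freedom_discrete_dist_step:
  fixes w :: "'a \<Rightarrow> real"
  assumes S: "finite S" and w: "\<And>x. 0 \<le> w x" "sum w S = 1" and a: "a \<in> S"
    and "0 < D" "0 < c"
  defines "p \<equiv> 2 * w a * (1 - w a)"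
  shows "metric_freedom (point_measure S (\<lambda>x. ennreal (w x))) (discrete_dist D) \<alpha>
           (\<lambda>x. if x = a then c else 0)
       = 1 - phi_coefficient p (1 - (\<Sum>x\<in>S. (w x)\<^sup>2)) p"
proof -
  let ?N = "point_measure (S \<times> S) (\<lambda>z. ennreal (w (fst z) * w (snd z)))"
  have "(\<Sum>z\<in>S \<times> S. w (fst z) * w (snd z)) = 1"
    using w by (simp add: sum.cartesian_product' sum_product[symmetric])
  then interpret N: prob_space ?N
    using S w by (intro prob_space_point_measure) auto
  define E where "E = {z \<in> S \<times> S. fst z \<noteq> snd z}"
  define G where "G = {z \<in> S \<times> S. (fst z = a) \<noteq> (snd z = a)}"
  have "spearman ?N (\<lambda>(x, y). discrete_dist D x y powr \<alpha>)
        (\<lambda>(x, y). \<bar>(if x = a then c else 0) - (if y = a then c else 0)\<bar>)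
      = spearman ?N (\<lambda>z. if z \<in> E then D powr \<alpha> else 0) (\<lambda>z. if z \<in> G then c else 0)"
    using \<open>0 < c\<close>
    by (intro spearman_cong) (auto simp: space_point_measure E_def G_def discrete_dist_def)
  also have "\<dots> = phi_coefficient (N.prob (E \<inter> G)) (N.prob E) (N.prob G)"
    using \<open>0 < D\<close> \<open>0 < c\<close>
    by (intro N.spearman_indicators) (auto simp: sets_point_measure E_def G_def)
  also have "E \<inter> G = G"
    by (auto simp: E_def G_def)
  finally show ?thesis
    using measure_pair_point_measure_off_diagonal[OF S w]
      measure_pair_point_measure_separating[OF S w a] w
    by (simp add: metric_freedom_def pair_measure_point_measure_finite[OF S S] E_def G_def p_def)
qed

section \<open>Masses realising a prescribed correlation\<close>

lemma phi_coefficient_nested: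
  assumes "0 < p" "p < 1" "0 < \<rho>"
  shows "phi_coefficient p (p / (p + \<rho>\<^sup>2 * (1 - p))) p = \<rho>"
proof -
  define k where "k = p + \<rho>\<^sup>2 * (1 - p)"
  have k: "0 < k"
    using assms by (simp add: k_def add_pos_nonneg)
  define P where "P = p / k"
  have one_minus_P: "1 - P = \<rho>\<^sup>2 * (1 - p) / k"
    using k by (simp add: P_def k_def field_simps)
  define r where "r = \<rho> * p * (1 - p) / k"
  have r: "0 < r"
    using assms k by (simp add: r_def)
  have "p - P * p = p * (1 - P)"
    by algebra
  also have "\<dots> = \<rho> * r"
    by (simp add: r_def one_minus_P power2_eq_square mult_ac)
  finally have "p - P * p = \<rho> * r" .
  moreover have "P * (1 - P) * p * (1 - p) = r\<^sup>2"
    unfolding one_minus_P by (simp add: r_def P_def power2_eq_square mult_ac)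
  ultimately show ?thesis
    using r by (simp add: phi_coefficient_def P_def k_def)
qed

lemma exists_nonneg_sum_product:
  assumes "0 \<le> s" "0 \<le> m" "2 * m \<le> s\<^sup>2"
  obtains u v :: real where "0 \<le> u" "0 \<le> v" "u + v = s" "2 * u * v = m"
proof -
  define r where "r = sqrt (s\<^sup>2 - 2 * m)"
  have "0 \<le> s\<^sup>2 - 2 * m"
    using assms(3) by linarith
  then have r: "0 \<le> r" "r\<^sup>2 = s\<^sup>2 - 2 * m"
    unfolding r_def by (rule real_sqrt_ge_zero, rule real_sqrt_pow2)
  have "r\<^sup>2 \<le> s\<^sup>2"
    using r(2) assms(2) by linarith
  then have "r \<le> s"
    using assms(1) by (rule power2_le_imp_le)
  have "2 * ((s + r) / 2) * ((s - r) / 2) = (s\<^sup>2 - r\<^sup>2) / 2"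
    by (simp add: power2_eq_square field_simps)
  then have product: "2 * ((s + r) / 2) * ((s - r) / 2) = m"
    using r(2) by simp
  have "0 \<le> (s + r) / 2" "0 \<le> (s - r) / 2" "(s + r) / 2 + (s - r) / 2 = s"
    using r(1) \<open>r \<le> s\<close> by (simp_all add: field_simps)
  then show thesis
    using product by (rule that)
qed

lemma phi_coefficient_nested_bounds:
  fixes \<rho> :: real
  assumes "0 < \<rho>" "\<rho> \<le> 1"
  defines "t \<equiv> \<rho>\<^sup>2 / 16"
  defines "p \<equiv> 2 * t * (1 - t)"
  defines "P \<equiv> p / (p + \<rho>\<^sup>2 * (1 - p))"
  shows "0 < p" "p < 1" "p \<le> P" "2 * (P - p) \<le> (1 - t)\<^sup>2"
proof -
  define k where "k = p + \<rho>\<^sup>2 * (1 - p)"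
  have \<rho>2: "0 < \<rho>\<^sup>2" "\<rho>\<^sup>2 \<le> 1"
    using assms(1,2) power_le_one[of \<rho> 2] by simp_all
  have t: "0 < t" "t \<le> 1/16"
    using \<rho>2 by (auto simp: t_def)
  have "p \<le> 2 * t"
    unfolding p_def using t by (intro mult_left_le) auto
  moreover show "0 < p"
    using t by (simp add: p_def)
  ultimately show "p < 1"
    using t by linarith
  have "0 \<le> p * (1 - \<rho>\<^sup>2)" "p * (1 - \<rho>\<^sup>2) \<le> 1 - \<rho>\<^sup>2"
    using \<rho>2 \<open>0 < p\<close> \<open>p < 1\<close> by (auto intro: mult_left_le_one_le)
  then have k: "\<rho>\<^sup>2 \<le> k" "k \<le> 1"
    unfolding k_def by (simp_all add: algebra_simps)
  with \<rho>2 have "0 < k"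
    by linarith
  have "p * k \<le> p"
    using k \<open>0 < p\<close> by (intro mult_left_le) auto
  then show "p \<le> P"
    using \<open>0 < k\<close> by (simp only: P_def k_def[symmetric] pos_le_divide_eq)
  have "P \<le> p / \<rho>\<^sup>2"
    unfolding P_def k_def[symmetric] using k(1) \<open>0 < p\<close> mult_pos_pos[OF \<open>0 < k\<close> \<rho>2(1)]
    by (rule divide_left_mono[OF _ less_imp_le])
  also have "\<dots> = (1 - t) / 8"
    using \<rho>2 by (simp add: p_def t_def field_simps)
  also have "\<dots> \<le> (1 - t)\<^sup>2 / 2"
  proof -
    have "(1 - t) * (1/8) \<le> (1 - t) * ((1 - t) / 2)"
      using t by (intro mult_left_mono) auto
    then show ?thesis
      by (simp add: power2_eq_square)
  qed
  finally show "2 * (P - p) \<le> (1 - t)\<^sup>2"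
    using \<open>0 < p\<close> by simp
qed

lemma three_point_weights:
  assumes "0 < \<rho>" "\<rho> \<le> 1"
  obtains w :: "real \<Rightarrow> real"
  where "\<And>x. 0 \<le> w x" "sum w {0, 1, 2} = 1" "w 2 < 1"
    "phi_coefficient (2 * w 2 * (1 - w 2)) (1 - (\<Sum>x\<in>{0, 1, 2}. (w x)\<^sup>2)) (2 * w 2 * (1 - w 2)) = \<rho>"
proof -
  define t where "t = \<rho>\<^sup>2 / 16"
  define p where "p = 2 * t * (1 - t)"
  define P where "P = p / (p + \<rho>\<^sup>2 * (1 - p))"
  note bounds = phi_coefficient_nested_bounds[OF assms, folded t_def p_def P_def]
  have t: "0 < t" "t < 1"
    using assms power_le_one[of \<rho> 2] by (simp_all add: t_def)
  moreover have "0 \<le> P - p" "2 * (P - p) \<le> (1 - t)\<^sup>2"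
    using bounds(3,4) by (simp_all add: P_def)
  ultimately have "0 \<le> 1 - t" "0 \<le> P - p" "2 * (P - p) \<le> (1 - t)\<^sup>2"
    by simp_all
  then obtain u v where uv: "0 \<le> u" "0 \<le> v" "u + v = 1 - t" "2 * u * v = P - p"
    by (rule exists_nonneg_sum_product)
  have "u\<^sup>2 + v\<^sup>2 = (u + v)\<^sup>2 - 2 * u * v"
    by algebra
  then have P_eq: "1 - (u\<^sup>2 + v\<^sup>2 + t\<^sup>2) = P"
    using uv by (simp add: p_def power2_eq_square algebra_simps)
  have phi: "phi_coefficient p P p = \<rho>"
    unfolding P_def using bounds(1,2) assms(1) by (rule phi_coefficient_nested)
  define w where "w x = (if x = 0 then u else if x = 1 then v else t)" for x :: real
  have w: "\<And>x. 0 \<le> w x" "sum w {0, 1, 2} = 1" "w 2 < 1"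
    using uv t by (auto simp: w_def)
  have squares: "(\<Sum>x\<in>{0, 1, 2}. (w x)\<^sup>2) = u\<^sup>2 + v\<^sup>2 + t\<^sup>2" and "w 2 = t"
    by (simp_all add: w_def add.assoc)
  have "phi_coefficient (2 * w 2 * (1 - w 2)) (1 - (\<Sum>x\<in>{0, 1, 2}. (w x)\<^sup>2))
      (2 * w 2 * (1 - w 2)) = \<rho>"
    using phi unfolding squares \<open>w 2 = t\<close> P_eq p_def .
  with w show thesis
    by (rule that)
qed

theorem theorem2:
  fixes F \<alpha> L0 W :: real
  assumes "0 \<le> F" "F < 1" "0 < \<alpha>" "\<alpha> \<le> 1" "0 < L0" "0 < W"
  shows "\<exists>(S :: real set) (d :: real \<Rightarrow> real \<Rightarrow> real) (s :: real \<Rightarrow> real)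
            (P0 :: real measure) (Ppi :: real measure).
           metric_on S d \<and> holder_on S d \<alpha> L0 s \<and>
           prob_space P0 \<and> prob_space Ppi \<and>
           space P0 = S \<and> sets Ppi = sets P0 \<and>
           s \<in> borel_measurable P0 \<and>
           (\<lambda>(x, y). d x y) \<in> borel_measurable (P0 \<Otimes>\<^sub>M P0) \<and>
           integrable P0 s \<and> integrable Ppi s \<and>
           metric_freedom P0 d \<alpha> s = F \<and>
           wasserstein1 d \<alpha> Ppi P0 = ennreal W \<and>
           lift Ppi P0 s \<ge> 1/2 * L0 * (1 - F) * W"
proof -
  have "0 < 1 - F" "1 - F \<le> 1"
    using assms by auto
  then obtain w :: "real \<Rightarrow> real" where w: "\<And>x. 0 \<le> w x" "sum w {0, 1, 2} = 1" "w 2 < 1"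
    and phi: "phi_coefficient (2 * w 2 * (1 - w 2)) (1 - (\<Sum>x\<in>{0, 1, 2}. (w x)\<^sup>2))
      (2 * w 2 * (1 - w 2)) = 1 - F"
    using three_point_weights by blast
  define S :: "real set" where "S = {0, 1, 2}"
  define P0 where "P0 = point_measure S (\<lambda>x. ennreal (w x))"
  define h where "h = W / (1 - w 2)"
  define D where "D = h powr (1 / \<alpha>)"
  define s where "s x = (if x = 2 then L0 * h else 0)" for x :: real
  have h: "0 < h" "W = h * (1 - w 2)" and D: "0 < D" "D powr \<alpha> = h"
    using assms w(3) by (simp_all add: h_def D_def powr_powr)
  have S: "finite S" "2 \<in> S" "space P0 = S" "sets P0 = Pow S"
    by (simp_all add: S_def P0_def space_point_measure sets_point_measure)
  have P0: "prob_space P0" "measure P0 {2} = w 2"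
    unfolding P0_def using S w
    by (auto intro: prob_space_point_measure simp: measure_point_measure_finite_if S_def)
  have freedom: "metric_freedom P0 (discrete_dist D) \<alpha> s = F"
    using metric_freedom_discrete_dist_step[OF S(1) w(1,2)[folded S_def] S(2) D(1), of "L0 * h" \<alpha>]
      phi h assms
    by (simp add: P0_def s_def[abs_def] S_def)
  have holder: "holder_on S (discrete_dist D) \<alpha> L0 s"
    using h D assms by (intro holder_on_discrete_dist) (simp add: s_def)
  have dist_measurable: "(\<lambda>(x, y). discrete_dist D x y) \<in> borel_measurable (P0 \<Otimes>\<^sub>M P0)"
    by (simp add: P0_def pair_measure_point_measure_finite[OF S(1) S(1) w(1) w(1)])
  have transport: "wasserstein1 (discrete_dist D) \<alpha> (return P0 2) P0 = ennreal W"
    using wasserstein1_discrete_dist_return[OF P0(1), of 2 D \<alpha>] S P0(2) D h by simp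
  have "lift (return P0 2) P0 s = L0 * W"
    using lift_return_step[OF P0(1), of 2 "L0 * h"] S P0(2) h by (simp add: s_def[abs_def])
  then have gain: "1/2 * L0 * (1 - F) * W \<le> lift (return P0 2) P0 s"
    using assms by simp
  have "s \<in> borel_measurable P0" "integrable P0 s"
    by (simp_all add: P0_def integrable_point_measure_finite[OF S(1)])
  then show ?thesis
    using S P0 metric_on_discrete_dist[OF D(1)] holder dist_measurable freedom transport gain
    by (intro exI[of _ S] exI[of _ "discrete_dist D"] exI[of _ s] exI[of _ P0]
        exI[of _ "return P0 2"])
      (simp add: integrable_return prob_space_return)
qed

end
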